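(* Let $L\ge1$ and put $u_\ell=e^{-2\mathcal{C}(\ell-1)/L}$ and $\pi_{(\ell)}=u_\ell/\sum_{\ell'=1}^L u_{\ell'}$ for $\ell=1,\dots,L$. Define, for $x\in[0,1]$, $$g_L(x)=\sum_{\ell=1}^L \pi_{(\ell)}\,\Phi\big(\mu(x,u_\ell\,\mathcal{C}'/R)\big),\qquad g(x)=\frac{2\mathcal{C}}{\nu}\int_0^1 e^{-2\mathcal{C}t}\,\Phi\big(\mu(x,e^{-2\mathcal{C}t}\mathcal{C}'/R)\big)\,dt .$$ Then $g_L(x)\ge g(x)$ for all $x\in[0,1]$, and moreover $g(x)=\frac1\nu\int_{1-\nu}^1\Phi\big(\mu(x,u\,\mathcal{C}'/R)\big)\,du$.
   Context: Fix an integer $M\ge2$, $snr=P/\sigma^2>0$, $\nu=snr/(1+snr)$, $\mathcal{C}=\tfrac12\ln(1+snr)$ (natural logarithm, so $e^{-2\mathcal{C}}=1-\nu$), constants $a\ge 0$, $\mathcal{C}'>0$, $R>0$. $\Phi,\phi$ denote the standard normal distribution function and density. For $x\in[0,1]$ and $u>0$, $$\mu(x,u)=\Big(\sqrt{u/(1-x\nu)}-1\Big)\sqrt{2\log M}-a.$$ *)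

theory Defs
  imports "HOL-Probability.Probability"
begin

definition Phi :: "real \<Rightarrow> real" where
  "Phi x = (LBINT t:{..x}. std_normal_density t)"

definition nu_of :: "real \<Rightarrow> real" where
  "nu_of snr = snr / (1 + snr)"

definition cap_C :: "real \<Rightarrow> real" where
  "cap_C snr = ln (1 + snr) / 2"

definition mu :: "nat \<Rightarrow> real \<Rightarrow> real \<Rightarrow> real \<Rightarrow> real \<Rightarrow> real" where
  "mu M snr a x u = (sqrt (u / (1 - x * nu_of snr)) - 1) * sqrt (2 * ln (real M)) - a"

definition u_l :: "real \<Rightarrow> nat \<Rightarrow> nat \<Rightarrow> real" where
  "u_l snr L l = exp (- 2 * cap_C snr * (real l - 1) / real L)"

definition pi_l :: "real \<Rightarrow> nat \<Rightarrow> nat \<Rightarrow> real" where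
  "pi_l snr L l = u_l snr L l / (\<Sum>l'=1..L. u_l snr L l')"

definition g_L :: "nat \<Rightarrow> real \<Rightarrow> real \<Rightarrow> real \<Rightarrow> real \<Rightarrow> nat \<Rightarrow> real \<Rightarrow> real" where
  "g_L M snr a C' R L x =
     (\<Sum>l=1..L. pi_l snr L l * Phi (mu M snr a x (u_l snr L l * C' / R)))"

definition g :: "nat \<Rightarrow> real \<Rightarrow> real \<Rightarrow> real \<Rightarrow> real \<Rightarrow> real \<Rightarrow> real" where
  "g M snr a C' R x =
     (2 * cap_C snr / nu_of snr) *
       (LBINT t=0..1. exp (- 2 * cap_C snr * t) *
          Phi (mu M snr a x (exp (- 2 * cap_C snr * t) * C' / R)))"

end

theory Submission imports Defs begin

(* The weights u_l = e^{-2C(l-1)/L}, l = 1..L+1, form a decreasing geometric grid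
   from u_1 = 1 down to u_{L+1} = e^{-2C} = 1 - nu.  For fixed x the integrand
   F(u) = Phi(mu(x, u C'/R)) (the definition integrand below) is continuous
   and nondecreasing in u.

   1. Phi is the cdf of the standard normal law, hence monotone and continuous.
   2. mu(x, .) is monotone and continuous, so F is; g_L(x) is the u_l-weighted
      average of F over the grid points.
   3. The substitution u = e^{-2Ct} turns g(x) into (1/nu) * int_{1-nu}^1 F.
   4. For a nondecreasing F on a decreasing grid, the integral is bounded by the
      upper Riemann sum sum_l (u_l - u_{l+1}) F(u_l); on a geometric grid
      u_{l+1} = r u_l this sum equals (1-r) sum_l u_l F(u_l), and normalising by
      the interval length (1-r) sum_l u_l turns it into the weighted average g_L(x). *)

lemma Phi_eq_cdf: "Phi x = cdf (density lborel std_normal_density) x"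
proof -
  let ?N = "density lborel (\<lambda>t. ennreal (std_normal_density t))"
  have "cdf ?N x = integral\<^sup>L ?N (indicator {..x})"
    by (simp add: cdf_def)
  also have "\<dots> = (LINT t|lborel. std_normal_density t *\<^sub>R indicator {..x} t)"
    by (rule integral_density) auto
  also have "\<dots> = Phi x"
    unfolding Phi_def set_lebesgue_integral_def by (simp add: mult.commute)
  finally show ?thesis by simp
qed

lemma real_distribution_std_normal: "real_distribution (density lborel std_normal_density)"
  unfolding real_distribution_def real_distribution_axioms_def
  using prob_space_normal_density by auto

lemma Phi_mono: "x \<le> y \<Longrightarrow> Phi x \<le> Phi y"
  unfolding Phi_eq_cdf
  using finite_borel_measure.cdf_nondecreasing
    [OF real_distribution.finite_borel_measure_M[OF real_distribution_std_normal]]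
  by blast

text \<open>The normal law has no atoms, so its cdf is continuous everywhere.\<close>
lemma isCont_Phi: "isCont Phi x"
proof -
  have "emeasure (density lborel std_normal_density) {x} = 0"
    by (subst emeasure_density) (auto intro!: nn_integral_null_set)
  hence "measure (density lborel std_normal_density) {x} = 0"
    by (simp add: measure_def)
  thus ?thesis
    unfolding Phi_eq_cdf[abs_def]
    using finite_borel_measure.isCont_cdf
      [OF real_distribution.finite_borel_measure_M[OF real_distribution_std_normal]]
    by simp
qed

lemma nu_of_bounds: "snr > 0 \<Longrightarrow> 0 < nu_of snr \<and> nu_of snr < 1"
  by (simp add: nu_of_def)

lemma exp_cap_C: "snr > 0 \<Longrightarrow> exp (- 2 * cap_C snr) = 1 - nu_of snr"
  by (simp add: cap_C_def nu_of_def exp_minus field_simps)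

lemma mu_mono_in_u:
  assumes "M \<ge> 1" and "x * nu_of snr < 1" and "u \<le> v"
  shows "mu M snr a x u \<le> mu M snr a x v"
proof -
  have "u / (1 - x * nu_of snr) \<le> v / (1 - x * nu_of snr)"
    using assms(2,3) by (intro divide_right_mono) auto
  hence "sqrt (u / (1 - x * nu_of snr)) \<le> sqrt (v / (1 - x * nu_of snr))"
    by simp
  thus ?thesis
    unfolding mu_def using assms(1) by (intro diff_right_mono mult_right_mono) auto
qed

lemma isCont_mu_in_u: "x * nu_of snr < 1 \<Longrightarrow> isCont (mu M snr a x) u"
  unfolding mu_def by (intro continuous_intros) auto

lemma interval_integral_eq_integral_continuous:
  fixes F :: "real \<Rightarrow> real"
  assumes "continuous_on UNIV F" and "a \<le> b"
  shows "(LBINT u=a..b. F u) = integral {a..b} F"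
  using interval_integral_eq_integral[of a b F]
    borel_integrable_atLeastAtMost'[OF continuous_on_subset[OF assms(1)], of a b] assms(2)
  by simp

lemma integral_exp_substitution:
  fixes F :: "real \<Rightarrow> real" and c :: real
  assumes F: "continuous_on UNIV F"
  shows "c * (LBINT t=0..1. exp (- c * t) * F (exp (- c * t))) = (LBINT u=exp (- c)..1. F u)"
proof -
  have "(LBINT t=ereal 0..ereal 1. (- c * exp (- c * t)) *\<^sub>R F (exp (- c * t)))
        = (LBINT u=ereal (exp (- c * 0))..ereal (exp (- c * 1)). F u)"
    by (rule interval_integral_substitution_finite)
      (auto intro!: derivative_eq_intros continuous_intros continuous_on_subset[OF F])
  also have "\<dots> = - (LBINT u=exp (- c)..1. F u)"
    by (simp add: one_ereal_def interval_integral_endpoints_reverse[of _ "ereal 1"])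
  finally have "(LBINT t=0..1. - c * (exp (- c * t) * F (exp (- c * t))))
                 = - (LBINT u=exp (- c)..1. F u)"
    by (simp add: zero_ereal_def one_ereal_def mult.assoc)
  thus ?thesis
    using interval_lebesgue_integral_mult_right[of lborel 0 1 "- c"] by simp
qed

lemma integral_le_upper_Riemann_sum:
  fixes U :: "nat \<Rightarrow> real" and F :: "real \<Rightarrow> real"
  assumes dec: "\<And>l. U (Suc l) \<le> U l"
    and mono: "\<And>x y. x \<le> y \<Longrightarrow> F x \<le> F y"
    and cont: "continuous_on UNIV F"
  shows "integral {U (Suc k)..U 1} F \<le> (\<Sum>l=1..k. (U l - U (Suc l)) * F (U l))"
proof (induction k)
  case 0
  then show ?case by simp
next
  case (Suc k)
  have int: "F integrable_on {a..b}" for a b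
    by (rule integrable_continuous_interval[OF continuous_on_subset[OF cont]]) simp
  have "U (Suc k) \<le> U 1"
    using dec by (induction k) (auto intro: order_trans)
  hence "integral {U (Suc (Suc k))..U 1} F
         = integral {U (Suc (Suc k))..U (Suc k)} F + integral {U (Suc k)..U 1} F"
    using Henstock_Kurzweil_Integration.integral_combine[where a="U (Suc (Suc k))" and c="U (Suc k)" and b="U 1" and f=F]
      dec[of "Suc k"] int
    by simp
  also have "integral {U (Suc (Suc k))..U (Suc k)} F
             \<le> integral {U (Suc (Suc k))..U (Suc k)} (\<lambda>_. F (U (Suc k)))"
    by (rule integral_le) (auto intro: int mono)
  also have "\<dots> = (U (Suc k) - U (Suc (Suc k))) * F (U (Suc k))"
    using dec[of "Suc k"] by simp
  finally show ?case using Suc.IH by simp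
qed

text \<open>On a geometric grid U (l+1) = r U l the cell lengths are proportional to
  the grid points, so the normalised upper Riemann sum is the U-weighted average
  of F over the grid points.\<close>
lemma geometric_grid_average_bound:
  fixes U :: "nat \<Rightarrow> real" and F :: "real \<Rightarrow> real" and r :: real
  assumes geom: "\<And>l. U (Suc l) = r * U l"
    and pos: "\<And>l. U l > 0" and r: "r < 1" and L: "L \<ge> 1"
    and mono: "\<And>x y. x \<le> y \<Longrightarrow> F x \<le> F y"
    and cont: "continuous_on UNIV F"
  shows "integral {U (Suc L)..U 1} F / (U 1 - U (Suc L))
         \<le> (\<Sum>l=1..L. U l * F (U l)) / (\<Sum>l=1..L. U l)"
proof -
  define S where "S = (\<Sum>l=1..L. U l)"
  have S_pos: "S > 0"
    unfolding S_def using L pos by (intro sum_pos) auto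
  have dec: "U (Suc l) \<le> U l" for l
    using geom[of l] pos[of l] r by (simp add: mult_le_cancel_right1)
  have "U 1 - U (Suc L) = (\<Sum>l=1..L. U l - U (Suc l))"
    using sum_Suc_diff[of 1 L "\<lambda>l. - U l"] L by (simp add: sum_negf)
  also have "\<dots> = (1 - r) * S"
    unfolding S_def by (simp add: geom sum_distrib_left algebra_simps sum_subtractf)
  finally have length: "U 1 - U (Suc L) = (1 - r) * S" .
  have "integral {U (Suc L)..U 1} F \<le> (\<Sum>l=1..L. (U l - U (Suc l)) * F (U l))"
    by (rule integral_le_upper_Riemann_sum[where U=U and F=F, OF dec mono cont])
  also have "\<dots> = (1 - r) * (\<Sum>l=1..L. U l * F (U l))"
    by (simp add: geom sum_distrib_left algebra_simps)
  finally have "integral {U (Suc L)..U 1} F / ((1 - r) * S)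
                \<le> (1 - r) * (\<Sum>l=1..L. U l * F (U l)) / ((1 - r) * S)"
    using S_pos r by (intro divide_right_mono) auto
  thus ?thesis
    using length S_pos r by (simp add: S_def)
qed

lemma u_l_geometric: "u_l snr L (Suc l) = exp (- 2 * cap_C snr / real L) * u_l snr L l"
proof -
  have "- 2 * cap_C snr * real l / real L
        = (- 2 * cap_C snr + - 2 * cap_C snr * (real l - 1)) / real L"
    by (simp add: algebra_simps)
  also have "\<dots> = - 2 * cap_C snr / real L + - 2 * cap_C snr * (real l - 1) / real L"
    by (rule add_divide_distrib)
  finally have "- 2 * cap_C snr * real l / real L
        = - 2 * cap_C snr / real L + - 2 * cap_C snr * (real l - 1) / real L" .
  thus ?thesis by (simp add: u_l_def exp_add[symmetric])
qed

lemma u_l_endpoints: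
  assumes "snr > 0" and "L \<ge> 1"
  shows "u_l snr L 1 = 1" and "u_l snr L (Suc L) = 1 - nu_of snr"
  using assms exp_cap_C[OF assms(1)] by (simp_all add: u_l_def)

definition integrand :: "nat \<Rightarrow> real \<Rightarrow> real \<Rightarrow> real \<Rightarrow> real \<Rightarrow> real \<Rightarrow> real \<Rightarrow> real" where
  "integrand M snr a C' R x u = Phi (mu M snr a x (u * C' / R))"

lemma x_nu_of_less_one:
  assumes "snr > 0" and "x \<in> {0..1}"
  shows "x * nu_of snr < 1"
proof -
  have "x * nu_of snr \<le> 1 * nu_of snr"
    using assms nu_of_bounds[OF assms(1)] by (intro mult_right_mono) auto
  thus ?thesis using nu_of_bounds[OF assms(1)] by linarith
qed

lemma integrand_mono:
  assumes "M \<ge> 1" and "snr > 0" and "x \<in> {0..1}" and "C' \<ge> 0" and "R > 0" and "u \<le> v"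
  shows "integrand M snr a C' R x u \<le> integrand M snr a C' R x v"
  unfolding integrand_def using assms x_nu_of_less_one[OF assms(2,3)]
  by (intro Phi_mono mu_mono_in_u divide_right_mono mult_right_mono) auto

lemma continuous_integrand:
  assumes "snr > 0" and "x \<in> {0..1}"
  shows "continuous_on UNIV (integrand M snr a C' R x)"
proof (intro continuous_at_imp_continuous_on ballI)
  fix u :: real
  have "isCont (\<lambda>u. u * C' / R) u"
    unfolding times_divide_eq_right[symmetric] by (intro continuous_intros)
  hence "isCont (\<lambda>u. mu M snr a x (u * C' / R)) u"
    by (rule isCont_o2) (rule isCont_mu_in_u[OF x_nu_of_less_one[OF assms]])
  thus "isCont (integrand M snr a C' R x) u"
    unfolding integrand_def by (rule isCont_o2) (rule isCont_Phi)
qed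

lemma g_eq_integral:
  assumes "snr > 0" and "x \<in> {0..1}"
  shows "g M snr a C' R x
         = (1 / nu_of snr) * (LBINT u=(1 - nu_of snr)..1. integrand M snr a C' R x u)"
proof -
  let ?C = "cap_C snr" and ?F = "integrand M snr a C' R x"
  have "2 * ?C * (LBINT t=0..1. exp (- (2 * ?C) * t) * ?F (exp (- (2 * ?C) * t)))
        = (LBINT u=(1 - nu_of snr)..1. ?F u)"
    using integral_exp_substitution[OF continuous_integrand[OF assms], of "2 * ?C"]
      exp_cap_C[OF assms(1)]
    by simp
  thus ?thesis
    unfolding g_def integrand_def using nu_of_bounds[OF assms(1)] by (simp add: field_simps)
qed

lemma g_L_eq_weighted_average:
  "g_L M snr a C' R L x
   = (\<Sum>l=1..L. u_l snr L l * integrand M snr a C' R x (u_l snr L l)) / (\<Sum>l=1..L. u_l snr L l)"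
  unfolding g_L_def pi_l_def integrand_def by (simp add: sum_divide_distrib)

theorem mainTheorem3:
  fixes M L :: nat and snr a C' R :: real
  assumes "M \<ge> 2" and "snr > 0" and "a \<ge> 0" and "C' > 0" and "R > 0" and "L \<ge> 1"
  shows "\<forall>x\<in>{0..1::real}.
           g_L M snr a C' R L x \<ge> g M snr a C' R x \<and>
           g M snr a C' R x =
             (1 / nu_of snr) * (LBINT u=(1 - nu_of snr)..1. Phi (mu M snr a x (u * C' / R)))"
proof
  fix x :: real assume x: "x \<in> {0..1}"
  let ?nu = "nu_of snr" and ?C = "cap_C snr" and ?U = "u_l snr L"
    and ?F = "integrand M snr a C' R x"
  have "(LBINT u=(1 - ?nu)..1. ?F u) = integral {1 - ?nu..1} ?F"
    using interval_integral_eq_integral_continuous[OF continuous_integrand[OF assms(2) x]]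
      nu_of_bounds[OF assms(2)]
    by (simp add: one_ereal_def)
  hence "g M snr a C' R x = integral {?U (Suc L)..?U 1} ?F / (?U 1 - ?U (Suc L))"
    using g_eq_integral[OF assms(2) x] u_l_endpoints[OF assms(2,6)] by simp
  also have "\<dots> \<le> (\<Sum>l=1..L. ?U l * ?F (?U l)) / (\<Sum>l=1..L. ?U l)"
  proof (rule geometric_grid_average_bound[where r = "exp (- 2 * ?C / real L)"])
    show "?U (Suc l) = exp (- 2 * ?C / real L) * ?U l" for l
      by (rule u_l_geometric)
    show "exp (- 2 * ?C / real L) < 1"
      using assms(2,6) by (simp add: cap_C_def)
  qed (use assms x integrand_mono continuous_integrand in \<open>auto simp: u_l_def\<close>)
  also have "\<dots> = g_L M snr a C' R L x"
    by (rule g_L_eq_weighted_average[symmetric])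
  finally show "g_L M snr a C' R L x \<ge> g M snr a C' R x \<and>
      g M snr a C' R x = (1 / ?nu) * (LBINT u=(1 - ?nu)..1. Phi (mu M snr a x (u * C' / R)))"
    using g_eq_integral[OF assms(2) x] unfolding integrand_def by simp
qed

end
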